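(* Let $\mathbf z_1,\dots,\mathbf z_d\in\mathbb Z^d$ be a basis of $\mathbb Z^d$ with $|\underline{\mathbf z_1}|\leq|\underline{\mathbf z_2}|\leq|\underline{\mathbf z_3}|$. Then for each $\boldsymbol\alpha\in\mathfrak S_2$ we have $\langle\boldsymbol\alpha,\mathbf z_1\rangle\cdot\langle\boldsymbol\alpha_2,\mathbf z_1\rangle>0$.
   Context: Let $d\geq3$. $|\cdot|$ is the Euclidean norm, $\langle\cdot,\cdot\rangle$ the standard inner product. For $\mathbf x=(x_1,\dots,x_d)\in\mathbb R^d$ write $\underline{\mathbf x}=(x_1,\dots,x_{d-1})$. Let $\pi_d=\{\mathbf x\in\mathbb R^d:x_d=1\}$. For given vectors $\mathbf z_1,\mathbf z_2,\dots$: $\det\underline\Lambda_{k,l}=|\underline{\mathbf z_k}\wedge\dots\wedge\underline{\mathbf z_{k+l-1}}|$; $R_k=1/(2|\underline{\mathbf z_{k+1}}|\det\underline\Lambda_{k,d-1})$; when $\underline{\mathbf z_k},\dots,\underline{\mathbf z_{k+d-2}}$ are linearly independent, $\boldsymbol\alpha_k$ is the unique point of $\pi_d$ orthogonal to $\mathbf z_k,\dots,\mathbf z_{k+d-2}$ and $\mathfrak S_k=\{\mathbf x\in\pi_d:|\mathbf x-\boldsymbol\alpha_k|\le R_k\}$; whenever $\boldsymbol\alpha_k$ or $\mathfrak S_k$ appears it is implicitly assumed well defined. *)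

theory Defs
  imports Complex_Main "Jordan_Normal_Form.Determinant"
begin

text \<open>Vectors of R^m are represented as functions nat => real, coordinates x_1..x_m
  being the values at 1..m. The underline operation (dropping the last coordinate)
  is realised by evaluating inner products/norms in dimension d-1.
  A family z_1, z_2, ... of integer vectors is z :: nat => nat => int, z k i = i-th
  coordinate of z_k.\<close>

definition inner_n :: "nat \<Rightarrow> (nat \<Rightarrow> real) \<Rightarrow> (nat \<Rightarrow> real) \<Rightarrow> real" where
  "inner_n m x y = (\<Sum>i=1..m. x i * y i)"

definition norm_n :: "nat \<Rightarrow> (nat \<Rightarrow> real) \<Rightarrow> real" where
  "norm_n m x = sqrt (inner_n m x x)"

definition rz :: "(nat \<Rightarrow> nat \<Rightarrow> int) \<Rightarrow> nat \<Rightarrow> nat \<Rightarrow> real" where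
  "rz z k = (\<lambda>i. real_of_int (z k i))"

definition wedge_norm :: "nat \<Rightarrow> (nat \<Rightarrow> nat \<Rightarrow> real) \<Rightarrow> nat \<Rightarrow> real" where
  "wedge_norm m u l = sqrt (det (mat l l (\<lambda>(i,j). inner_n m (u i) (u j))))"

definition detLam :: "nat \<Rightarrow> (nat \<Rightarrow> nat \<Rightarrow> int) \<Rightarrow> nat \<Rightarrow> nat \<Rightarrow> real" where
  "detLam d z k l = wedge_norm (d - 1) (\<lambda>i. rz z (k + i)) l"

definition R_rad :: "nat \<Rightarrow> (nat \<Rightarrow> nat \<Rightarrow> int) \<Rightarrow> nat \<Rightarrow> real" where
  "R_rad d z k = 1 / (2 * norm_n (d - 1) (rz z (k + 1)) * detLam d z k (d - 1))"

definition pi_plane :: "nat \<Rightarrow> (nat \<Rightarrow> real) set" where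
  "pi_plane d = {x. x d = 1}"

definition under_indep :: "nat \<Rightarrow> (nat \<Rightarrow> nat \<Rightarrow> int) \<Rightarrow> nat \<Rightarrow> bool" where
  "under_indep d z k \<longleftrightarrow>
     (\<forall>c :: nat \<Rightarrow> real. (\<forall>i\<in>{1..d-1}. (\<Sum>j<d-1. c j * rz z (k + j) i) = 0)
        \<longrightarrow> (\<forall>j<d-1. c j = 0))"

text \<open>alpha_k: the unique point of pi_d orthogonal to z_k, ..., z_(k+d-2)
  (normalised to vanish outside the coordinates 1..d).\<close>
definition alpha_pt :: "nat \<Rightarrow> (nat \<Rightarrow> nat \<Rightarrow> int) \<Rightarrow> nat \<Rightarrow> nat \<Rightarrow> real" where
  "alpha_pt d z k = (THE x. x \<in> pi_plane d \<and> (\<forall>j\<in>{k..k+d-2}. inner_n d x (rz z j) = 0)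
                         \<and> (\<forall>i. i \<notin> {1..d} \<longrightarrow> x i = 0))"

definition S_set :: "nat \<Rightarrow> (nat \<Rightarrow> nat \<Rightarrow> int) \<Rightarrow> nat \<Rightarrow> (nat \<Rightarrow> real) set" where
  "S_set d z k = {x \<in> pi_plane d.
      norm_n d (\<lambda>i. x i - alpha_pt d z k i) \<le> R_rad d z k}"

definition is_Z_basis :: "nat \<Rightarrow> (nat \<Rightarrow> nat \<Rightarrow> int) \<Rightarrow> bool" where
  "is_Z_basis d z \<longleftrightarrow>
     (\<forall>v :: nat \<Rightarrow> int. \<exists>c :: nat \<Rightarrow> int. \<forall>i\<in>{1..d}. v i = (\<Sum>k=1..d. c k * z k i)) \<and>
     (\<forall>c :: nat \<Rightarrow> int. (\<forall>i\<in>{1..d}. (\<Sum>k=1..d. c k * z k i) = 0) \<longrightarrow> (\<forall>k\<in>{1..d}. c k = 0))"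

end

theory Submission
  imports Defs "HOL-Analysis.Convex"
begin

(* Since e_d is an integral
   combination of z_1, ..., z_d, pairing it with alpha_2 shows c = <alpha_2, z_1> <> 0.
   The first d - 1 coordinates of alpha_2 solve a linear system whose matrix A has the
   integral rows underline z_2, ..., underline z_d, so by Cramer's rule det A * c is a
   nonzero integer; as |det A| = det underline Lambda_{2,d-1} =: D, this gives |c| >= 1/D.
   For alpha in S_2 the difference alpha - alpha_2 has last coordinate 0, so by
   Cauchy-Schwarz |<alpha - alpha_2, z_1>| <= R_2 |underline z_1| <= R_2 |underline z_3|
   = 1/(2D) <= |c|/2, and <alpha, z_1> has the sign of c. *)

lemma inner_n_Suc: "inner_n (Suc m) x y = inner_n m x y + x (Suc m) * y (Suc m)"
  by (simp add: inner_n_def)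

lemma inner_n_eq_sum_lessThan: "inner_n m x y = (\<Sum>k<m. x (Suc k) * y (Suc k))"
  by (simp add: inner_n_def sum.atLeast1_atMost_eq)

lemma inner_n_diff_left: "inner_n m (\<lambda>i. x i - y i) w = inner_n m x w - inner_n m y w"
  by (simp add: inner_n_def left_diff_distrib sum_subtractf)

lemma norm_n_nonneg: "0 \<le> norm_n m x"
  by (simp add: norm_n_def inner_n_def sum_nonneg)

lemma abs_inner_n_le: "\<bar>inner_n m x y\<bar> \<le> norm_n m x * norm_n m y"
proof -
  have "(inner_n m x y)\<^sup>2 \<le> inner_n m x x * inner_n m y y"
    using Cauchy_Schwarz_ineq_sum[of x y "{1..m}"] by (simp add: inner_n_def power2_eq_square)
  then show ?thesis
    unfolding norm_n_def real_sqrt_mult[symmetric] by (metis real_sqrt_abs real_sqrt_le_mono)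
qed

lemma det_Ints:
  assumes "A \<in> carrier_mat n n" and "\<And>i j. i < n \<Longrightarrow> j < n \<Longrightarrow> A $$ (i, j) \<in> \<int>"
  shows "det A \<in> \<int>"
  unfolding det_def'[OF assms(1)]
  by (intro Ints_sum Ints_mult Ints_prod) (auto simp: sign_def intro: assms(2) permutes_in_image)

lemma det_mult_solution_Ints:
  assumes A: "A \<in> carrier_mat n n" and x: "x \<in> carrier_vec n" and k: "k < n"
    and "\<And>i j. i < n \<Longrightarrow> j < n \<Longrightarrow> A $$ (i, j) \<in> \<int>"
    and "\<And>i. i < n \<Longrightarrow> (A *\<^sub>v x) $ i \<in> \<int>"
  shows "det A * x $ k \<in> \<int>"
proof -
  have "det (replace_col A (A *\<^sub>v x) k) \<in> \<int>"
    using A assms(4,5) by (intro det_Ints[of _ n]) (auto simp: replace_col_def)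
  then show ?thesis
    using cramer_lemma_mat[OF A x k] by (simp add: mult.commute)
qed

lemma det_nonzero_solvable:
  fixes A :: "'a :: field mat"
  assumes A: "A \<in> carrier_mat n n" and "det A \<noteq> 0" and b: "b \<in> carrier_vec n"
  obtains x where "x \<in> carrier_vec n" and "A *\<^sub>v x = b"
proof
  let ?x = "(1 / det A) \<cdot>\<^sub>v (adj_mat A *\<^sub>v b)"
  show "?x \<in> carrier_vec n"
    using adj_mat(1)[OF A] b by simp
  have "A *\<^sub>v ?x = (1 / det A) \<cdot>\<^sub>v ((A * adj_mat A) *\<^sub>v b)"
    using A adj_mat(1)[OF A] b by (simp add: mult_mat_vec assoc_mult_mat_vec)
  also have "\<dots> = b"
    using adj_mat(2)[OF A] b \<open>det A \<noteq> 0\<close> by (auto simp: smult_smult_assoc)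
  finally show "A *\<^sub>v ?x = b" .
qed

lemma det_nonzero_mult_mat_vec_inj:
  fixes A :: "'a :: idom mat"
  assumes A: "A \<in> carrier_mat n n" and "det A \<noteq> 0"
    and u: "u \<in> carrier_vec n" and v: "v \<in> carrier_vec n" and "A *\<^sub>v u = A *\<^sub>v v"
  shows "u = v"
proof -
  have "A *\<^sub>v (u - v) = 0\<^sub>v n"
    using assms by (simp add: mult_minus_distrib_mat_vec)
  moreover have "u - v \<in> carrier_vec n"
    using u v by simp
  ultimately have "u - v = 0\<^sub>v n"
    using det_0_iff_vec_prod_zero[OF A] assms(2) by blast
  show ?thesis
  proof (rule eq_vecI)
    fix i assume "i < dim_vec v"
    then have "(u - v) $ i = 0"
      using \<open>u - v = 0\<^sub>v n\<close> v by simp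
    then show "u $ i = v $ i"
      using \<open>i < dim_vec v\<close> u v by simp
  qed (use u v in simp)
qed

(* Row j of under_mat is underline z_(k+j). For x in pi_d with first d - 1 coordinates a,
   the conditions <x, z_(k+j)> = 0 read under_mat *v a = - last_vec. *)
definition under_mat :: "nat \<Rightarrow> (nat \<Rightarrow> nat \<Rightarrow> int) \<Rightarrow> nat \<Rightarrow> real mat" where
  "under_mat d z k = mat (d - 1) (d - 1) (\<lambda>(j, i). rz z (k + j) (Suc i))"

definition last_vec :: "nat \<Rightarrow> (nat \<Rightarrow> nat \<Rightarrow> int) \<Rightarrow> nat \<Rightarrow> real vec" where
  "last_vec d z k = vec (d - 1) (\<lambda>j. rz z (k + j) d)"

definition pi_lift :: "nat \<Rightarrow> real vec \<Rightarrow> nat \<Rightarrow> real" where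
  "pi_lift d a = (\<lambda>i. if i = d then 1 else if 1 \<le> i \<and> i < d then a $ (i - 1) else 0)"

lemma under_mat_carrier: "under_mat d z k \<in> carrier_mat (d - 1) (d - 1)"
  by (simp add: under_mat_def)

lemma under_mat_Ints: "i < d - 1 \<Longrightarrow> j < d - 1 \<Longrightarrow> under_mat d z k $$ (i, j) \<in> \<int>"
  by (simp add: under_mat_def rz_def)

lemma inner_n_eq_under_mat:
  assumes "d = Suc n" and "x d = 1" and "j < n"
  shows "inner_n d x (rz z (k + j))
    = (under_mat d z k *\<^sub>v vec n (\<lambda>i. x (Suc i))) $ j + last_vec d z k $ j"
  using assms
  by (simp add: inner_n_Suc inner_n_eq_sum_lessThan under_mat_def last_vec_def
      scalar_prod_def atLeast0LessThan mult.commute)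

lemma detLam_eq_abs_det_under_mat: "detLam d z k (d - 1) = \<bar>det (under_mat d z k)\<bar>"
proof -
  let ?A = "under_mat d z k"
  have gram: "mat (d - 1) (d - 1) (\<lambda>(i, j). inner_n (d - 1) (rz z (k + i)) (rz z (k + j)))
      = ?A * ?A\<^sup>T"
    by (rule eq_matI) (auto simp: under_mat_def inner_n_eq_sum_lessThan scalar_prod_def
        atLeast0LessThan)
  have "det (?A * ?A\<^sup>T) = det ?A * det ?A"
    using det_mult[OF under_mat_carrier, of "?A\<^sup>T"] det_transpose[OF under_mat_carrier]
    by (simp add: under_mat_def)
  then show ?thesis
    unfolding detLam_def wedge_norm_def gram by simp
qed

lemma det_under_mat_nonzero:
  assumes "under_indep d z k"
  shows "det (under_mat d z k) \<noteq> 0"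
proof
  let ?A = "under_mat d z k"
  assume "det ?A = 0"
  then have "det ?A\<^sup>T = 0"
    by (simp add: det_transpose[OF under_mat_carrier])
  then obtain v where v: "v \<in> carrier_vec (d - 1)" "v \<noteq> 0\<^sub>v (d - 1)" "?A\<^sup>T *\<^sub>v v = 0\<^sub>v (d - 1)"
    using det_0_iff_vec_prod_zero[of "?A\<^sup>T" "d - 1"] under_mat_carrier by fastforce
  have "(\<Sum>j<d - 1. v $ j * rz z (k + j) i) = 0" if "i \<in> {1..d - 1}" for i
  proof -
    obtain l where l: "i = Suc l" "l < d - 1"
      using \<open>i \<in> {1..d - 1}\<close> by (cases i) auto
    have "(?A\<^sup>T *\<^sub>v v) $ l = 0"
      using v(3) l by simp
    then show ?thesis
      using l v(1) by (simp add: under_mat_def scalar_prod_def atLeast0LessThan mult.commute)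
  qed
  then have "\<forall>j<d - 1. v $ j = 0"
    using assms unfolding under_indep_def by blast
  then have "v = 0\<^sub>v (d - 1)"
    using v(1) by (intro eq_vecI) auto
  with v(2) show False ..
qed

lemma pi_lift_orthogonal:
  assumes "d = Suc n" and "a \<in> carrier_vec n" and "under_mat d z k *\<^sub>v a = - last_vec d z k"
    and "j < n"
  shows "inner_n d (pi_lift d a) (rz z (k + j)) = 0"
proof -
  have "vec n (\<lambda>i. pi_lift d a (Suc i)) = a"
    using assms(1,2) by (intro eq_vecI) (auto simp: pi_lift_def)
  then show ?thesis
    using assms by (simp add: inner_n_eq_under_mat pi_lift_def last_vec_def)
qed

lemma alpha_pt_eq_pi_lift:
  assumes "2 \<le> d" and "under_indep d z k" and a: "a \<in> carrier_vec (d - 1)"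
    and sol: "under_mat d z k *\<^sub>v a = - last_vec d z k"
  shows "alpha_pt d z k = pi_lift d a"
  unfolding alpha_pt_def
proof (rule the_equality, intro conjI ballI allI impI)
  obtain n where n: "d = Suc n" "1 \<le> n"
    using assms(1) by (cases d) auto
  show "pi_lift d a \<in> pi_plane d"
    by (simp add: pi_lift_def pi_plane_def)
  show "inner_n d (pi_lift d a) (rz z j) = 0" if "j \<in> {k..k + d - 2}" for j
    using pi_lift_orthogonal[OF n(1), of a z k "j - k"] a sol that n by auto
  show "pi_lift d a i = 0" if "i \<notin> {1..d}" for i
    using that assms(1) by (auto simp: pi_lift_def)
  fix y
  assume y: "y \<in> pi_plane d \<and> (\<forall>j\<in>{k..k + d - 2}. inner_n d y (rz z j) = 0)
    \<and> (\<forall>i. i \<notin> {1..d} \<longrightarrow> y i = 0)"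
  then have "y d = 1"
    by (simp add: pi_plane_def)
  have "under_mat d z k *\<^sub>v vec n (\<lambda>i. y (Suc i)) = under_mat d z k *\<^sub>v a"
  proof (rule eq_vecI)
    fix j assume "j < dim_vec (under_mat d z k *\<^sub>v a)"
    then have "j < n"
      using n by (simp add: under_mat_def)
    then have "inner_n d y (rz z (k + j)) = 0"
      using y n by auto
    then show "(under_mat d z k *\<^sub>v vec n (\<lambda>i. y (Suc i))) $ j = (under_mat d z k *\<^sub>v a) $ j"
      using inner_n_eq_under_mat[of d n y j z k] \<open>y d = 1\<close> sol \<open>j < n\<close> n
      by (simp add: last_vec_def)
  qed (simp add: under_mat_def)
  then have "vec n (\<lambda>i. y (Suc i)) = a"
    using det_nonzero_mult_mat_vec_inj[OF under_mat_carrier det_under_mat_nonzero[OF assms(2)]] a n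
    by auto
  then have y_Suc: "y (Suc i) = a $ i" if "i < n" for i
    using that by auto
  show "y = pi_lift d a"
  proof
    fix i
    consider "i = d" | "1 \<le> i" "i < d" | "i \<notin> {1..d}"
      by fastforce
    then show "y i = pi_lift d a i"
      by cases (use y \<open>y d = 1\<close> y_Suc[of "i - 1"] n in \<open>auto simp: pi_lift_def\<close>)
  qed
qed

context
  fixes d :: nat and z :: "nat \<Rightarrow> nat \<Rightarrow> int" and k :: nat
  assumes d: "2 \<le> d" and indep: "under_indep d z k"
begin

lemma alpha_pt_eq_pi_lift_solution:
  obtains a where "a \<in> carrier_vec (d - 1)" and "under_mat d z k *\<^sub>v a = - last_vec d z k"
    and "alpha_pt d z k = pi_lift d a"
proof -
  obtain a where "a \<in> carrier_vec (d - 1)" "under_mat d z k *\<^sub>v a = - last_vec d z k"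
    using det_nonzero_solvable[OF under_mat_carrier det_under_mat_nonzero[OF indep]]
    by (metis last_vec_def uminus_carrier_vec vec_carrier)
  with alpha_pt_eq_pi_lift[OF d indep] that show ?thesis
    by blast
qed

lemma alpha_pt_last: "alpha_pt d z k d = 1"
  by (rule alpha_pt_eq_pi_lift_solution) (simp add: pi_lift_def)

lemma alpha_pt_orthogonal:
  assumes "j \<in> {k..k + d - 2}"
  shows "inner_n d (alpha_pt d z k) (rz z j) = 0"
proof (rule alpha_pt_eq_pi_lift_solution)
  fix a assume "a \<in> carrier_vec (d - 1)" "under_mat d z k *\<^sub>v a = - last_vec d z k"
    "alpha_pt d z k = pi_lift d a"
  then show ?thesis
    using pi_lift_orthogonal[of d "d - 1" a z k "j - k"] assms d by auto
qed

lemma det_under_mat_mult_alpha_pt_Ints: "det (under_mat d z k) * alpha_pt d z k i \<in> \<int>"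
proof (rule alpha_pt_eq_pi_lift_solution)
  fix a assume a: "a \<in> carrier_vec (d - 1)" and sol: "under_mat d z k *\<^sub>v a = - last_vec d z k"
    and "alpha_pt d z k = pi_lift d a"
  have "det (under_mat d z k) * a $ (i - 1) \<in> \<int>" if "1 \<le> i" "i < d"
    using that a sol under_mat_Ints
    by (intro det_mult_solution_Ints[OF under_mat_carrier a]) (auto simp: last_vec_def rz_def)
  moreover have "det (under_mat d z k) \<in> \<int>"
    using under_mat_Ints by (intro det_Ints[OF under_mat_carrier])
  ultimately show ?thesis
    using \<open>alpha_pt d z k = pi_lift d a\<close> by (simp add: pi_lift_def)
qed

lemma det_under_mat_mult_inner_alpha_pt_Ints:
  "det (under_mat d z k) * inner_n d (alpha_pt d z k) (rz z m) \<in> \<int>"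
  unfolding inner_n_def sum_distrib_left
  using det_under_mat_mult_alpha_pt_Ints
  by (intro Ints_sum) (metis Ints_mult Ints_of_int mult.assoc rz_def)

end

lemma Z_basis_inner_first_nonzero:
  assumes basis: "is_Z_basis d z" and "1 \<le> d" and "x d = 1"
    and orth: "\<forall>j\<in>{2..d}. inner_n d x (rz z j) = 0"
  shows "inner_n d x (rz z 1) \<noteq> 0"
proof
  assume first: "inner_n d x (rz z 1) = 0"
  obtain c :: "nat \<Rightarrow> int" where c: "\<forall>i\<in>{1..d}. (if i = d then 1 else 0) = (\<Sum>k=1..d. c k * z k i)"
    using conjunct1[OF basis[unfolded is_Z_basis_def], rule_format, of "\<lambda>i. if i = d then 1 else 0"]
    by blast
  have "1 = (\<Sum>i=1..d. if i = d then x i else 0)"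
    using \<open>1 \<le> d\<close> \<open>x d = 1\<close> by simp
  also have "\<dots> = (\<Sum>i=1..d. x i * real_of_int (\<Sum>k=1..d. c k * z k i))"
  proof (intro sum.cong refl)
    fix i assume "i \<in> {1..d}"
    then have "(\<Sum>k=1..d. c k * z k i) = (if i = d then 1 else 0)"
      using c by simp
    then show "(if i = d then x i else 0) = x i * real_of_int (\<Sum>k=1..d. c k * z k i)"
      by (simp del: of_int_sum)
  qed
  also have "\<dots> = (\<Sum>i=1..d. \<Sum>k=1..d. real_of_int (c k) * (x i * rz z k i))"
    by (simp add: sum_distrib_left rz_def algebra_simps)
  also have "\<dots> = (\<Sum>k=1..d. real_of_int (c k) * inner_n d x (rz z k))"
    by (subst sum.swap) (simp add: inner_n_def sum_distrib_left)
  also have "\<dots> = 0"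
  proof (intro sum.neutral ballI)
    fix k assume "k \<in> {1..d}"
    then have "k = 1 \<or> k \<in> {2..d}"
      by auto
    then show "real_of_int (c k) * inner_n d x (rz z k) = 0"
      using first orth by auto
  qed
  finally show False
    by simp
qed

lemma S_set_inner_close:
  assumes "\<alpha> \<in> S_set d z k" and "1 \<le> d" and "alpha_pt d z k d = 1"
  shows "\<bar>inner_n d \<alpha> w - inner_n d (alpha_pt d z k) w\<bar> \<le> R_rad d z k * norm_n (d - 1) w"
proof -
  define \<delta> where "\<delta> = (\<lambda>i. \<alpha> i - alpha_pt d z k i)"
  have "\<delta> d = 0"
    using assms by (simp add: \<delta>_def S_set_def pi_plane_def)
  then have drop_last: "inner_n d \<delta> v = inner_n (d - 1) \<delta> v" for v
    using inner_n_Suc[of "d - 1" \<delta> v] \<open>1 \<le> d\<close> by simp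
  have "inner_n d \<alpha> w - inner_n d (alpha_pt d z k) w = inner_n d \<delta> w"
    by (simp add: \<delta>_def inner_n_diff_left)
  then have "\<bar>inner_n d \<alpha> w - inner_n d (alpha_pt d z k) w\<bar> = \<bar>inner_n (d - 1) \<delta> w\<bar>"
    by (simp add: drop_last)
  also have "\<dots> \<le> norm_n (d - 1) \<delta> * norm_n (d - 1) w"
    by (rule abs_inner_n_le)
  also have "\<dots> \<le> R_rad d z k * norm_n (d - 1) w"
    using assms(1) unfolding norm_n_def drop_last[symmetric]
    by (intro mult_right_mono real_sqrt_ge_zero) (auto simp: S_set_def \<delta>_def norm_n_def inner_n_def sum_nonneg)
  finally show ?thesis .
qed

lemma R_rad_mult_le:
  assumes "0 \<le> N" and "N \<le> norm_n (d - 1) (rz z (k + 1))"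
  shows "R_rad d z k * N \<le> 1 / (2 * detLam d z k (d - 1))"
proof -
  let ?D = "detLam d z k (d - 1)" and ?N = "norm_n (d - 1) (rz z (k + 1))"
  have "0 \<le> ?D"
    unfolding detLam_eq_abs_det_under_mat by simp
  then have "R_rad d z k * N \<le> R_rad d z k * ?N"
    using assms by (intro mult_left_mono) (simp_all add: R_rad_def norm_n_nonneg)
  also have "\<dots> \<le> 1 / (2 * ?D)"
    using \<open>0 \<le> ?D\<close> by (cases "?N = 0") (simp_all add: R_rad_def)
  finally show ?thesis .
qed

lemma mult_pos_if_close:
  fixes c e :: real
  assumes "c \<noteq> 0" and "\<bar>e - c\<bar> \<le> \<bar>c\<bar> / 2"
  shows "0 < e * c"
  using assms by (cases "0 < c") (auto simp: abs_if zero_less_mult_iff split: if_splits)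

theorem corollary1:
  fixes d :: nat and z :: "nat \<Rightarrow> nat \<Rightarrow> int" and \<alpha> :: "nat \<Rightarrow> real"
  assumes "d \<ge> 3"
    and "is_Z_basis d z"
    and "norm_n (d - 1) (rz z 1) \<le> norm_n (d - 1) (rz z 2)"
    and "norm_n (d - 1) (rz z 2) \<le> norm_n (d - 1) (rz z 3)"
    and "under_indep d z 2"
    and "\<alpha> \<in> S_set d z 2"
  shows "inner_n d \<alpha> (rz z 1) * inner_n d (alpha_pt d z 2) (rz z 1) > 0"
proof -
  have d: "2 \<le> d"
    using assms(1) by simp
  define c where "c = inner_n d (alpha_pt d z 2) (rz z 1)"
  define D where "D = \<bar>det (under_mat d z 2)\<bar>"
  have last: "alpha_pt d z 2 d = 1"
    by (rule alpha_pt_last[OF d assms(5)])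
  have "c \<noteq> 0"
    unfolding c_def using d last alpha_pt_orthogonal[OF d assms(5)]
    by (intro Z_basis_inner_first_nonzero[OF assms(2)]) auto
  moreover have "0 < D"
    using det_under_mat_nonzero[OF assms(5)] by (simp add: D_def)
  moreover have "1 \<le> D * \<bar>c\<bar>"
    using Ints_nonzero_abs_ge1[OF det_under_mat_mult_inner_alpha_pt_Ints[OF d assms(5)]]
      \<open>c \<noteq> 0\<close> \<open>0 < D\<close> by (simp add: c_def D_def abs_mult)
  ultimately have "1 / (2 * D) \<le> \<bar>c\<bar> / 2"
    by (simp add: field_simps)
  moreover have "R_rad d z 2 * norm_n (d - 1) (rz z 1) \<le> 1 / (2 * D)"
    unfolding D_def detLam_eq_abs_det_under_mat[symmetric]
    by (intro R_rad_mult_le norm_n_nonneg) (use assms(3,4) in simp)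
  moreover have "\<bar>inner_n d \<alpha> (rz z 1) - c\<bar> \<le> R_rad d z 2 * norm_n (d - 1) (rz z 1)"
    unfolding c_def using assms(6) d last by (intro S_set_inner_close) auto
  ultimately show ?thesis
    using mult_pos_if_close[OF \<open>c \<noteq> 0\<close>] by (simp add: c_def)
qed

end
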